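(* Let $1<w\le 2$, $1<h\le 2$ and $n\ge 2$. There exist reals $\frac12\le y_1<\dots<y_n\le h-\frac12$ such that the instance consisting of the strip $[0,w]\times[0,h]$ and these $y_i$ admits a staircase layout with gap $\frac{w+h-2}{n-1}$.
   Context: A layout is a pair $(\mathbf x,\prec)$ where $\mathbf x=(x_1,\dots,x_n)$ with $x_i\in[\frac12,w-\frac12]$, and $\prec$ is a total order (stacking order) on the squares $s_1,\dots,s_n$, where $s_i$ is the closed axis-parallel unit square with centre $(x_i,y_i)$. If $s_i\prec s_j$ we say $s_j$ is in front of $s_i$ and $s_i$ is behind $s_j$. A point $p$ on the boundary of $s_i$ is visible if every square $s_j$ ($j\neq i$) containing $p$ is behind $s_i$. The visible perimeter of $s_i$ is the total length of its visible boundary points; the gap of $s_i$ is its visible perimeter minus $2$, and the gap of a layout is the minimum of the gaps of its squares. A staircase is a layout in which $x_1\le\dots\le x_n$ or $x_1\ge\dots\ge x_n$, and in which $s_1\prec\dots\prec s_n$ or $s_1\succ\dots\succ s_n$. *)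

theory Defs
  imports "HOL-Analysis.Analysis"
begin

text \<open>Squares are indexed by 1..n; x and y give the centres; prec is the stacking order
  (prec i j means s_i is behind s_j, i.e. s_j is in front of s_i).\<close>

definition usquare :: "real \<Rightarrow> real \<Rightarrow> (real \<times> real) set" where
  "usquare a b = {p. \<bar>fst p - a\<bar> \<le> 1/2 \<and> \<bar>snd p - b\<bar> \<le> 1/2}"

definition strict_total_order_on :: "nat set \<Rightarrow> (nat \<Rightarrow> nat \<Rightarrow> bool) \<Rightarrow> bool" where
  "strict_total_order_on A r \<longleftrightarrow>
     (\<forall>i\<in>A. \<not> r i i) \<and>
     (\<forall>i\<in>A. \<forall>j\<in>A. \<forall>k\<in>A. r i j \<longrightarrow> r j k \<longrightarrow> r i k) \<and>
     (\<forall>i\<in>A. \<forall>j\<in>A. i \<noteq> j \<longrightarrow> r i j \<or> r j i)"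

definition is_layout :: "real \<Rightarrow> nat \<Rightarrow> (nat \<Rightarrow> real) \<Rightarrow> (nat \<Rightarrow> nat \<Rightarrow> bool) \<Rightarrow> bool" where
  "is_layout w n x prec \<longleftrightarrow>
     (\<forall>i\<in>{1..n}. 1/2 \<le> x i \<and> x i \<le> w - 1/2) \<and> strict_total_order_on {1..n} prec"

definition visible :: "nat \<Rightarrow> (nat \<Rightarrow> real) \<Rightarrow> (nat \<Rightarrow> real) \<Rightarrow> (nat \<Rightarrow> nat \<Rightarrow> bool)
                        \<Rightarrow> nat \<Rightarrow> real \<times> real \<Rightarrow> bool" where
  "visible n x y prec i p \<longleftrightarrow>
     p \<in> frontier (usquare (x i) (y i)) \<and>
     (\<forall>j\<in>{1..n}. j \<noteq> i \<longrightarrow> p \<in> usquare (x j) (y j) \<longrightarrow> prec j i)"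

definition side :: "real \<Rightarrow> real \<Rightarrow> nat \<Rightarrow> real \<Rightarrow> real \<times> real" where
  "side a b k t =
     (if k = 0 then (a - 1/2 + t, b - 1/2)
      else if k = 1 then (a - 1/2 + t, b + 1/2)
      else if k = 2 then (a - 1/2, b - 1/2 + t)
      else (a + 1/2, b - 1/2 + t))"

text \<open>Visible perimeter: total length of the visible boundary points (sum over the four sides of
  the length of the visible part; the corners have measure zero).\<close>
definition visible_perimeter :: "nat \<Rightarrow> (nat \<Rightarrow> real) \<Rightarrow> (nat \<Rightarrow> real) \<Rightarrow> (nat \<Rightarrow> nat \<Rightarrow> bool)
                                   \<Rightarrow> nat \<Rightarrow> real" where
  "visible_perimeter n x y prec i =
     (\<Sum>k<4. measure lebesgue {t \<in> {0..1}. visible n x y prec i (side (x i) (y i) k t)})"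

definition square_gap :: "nat \<Rightarrow> (nat \<Rightarrow> real) \<Rightarrow> (nat \<Rightarrow> real) \<Rightarrow> (nat \<Rightarrow> nat \<Rightarrow> bool)
                            \<Rightarrow> nat \<Rightarrow> real" where
  "square_gap n x y prec i = visible_perimeter n x y prec i - 2"

definition layout_gap :: "nat \<Rightarrow> (nat \<Rightarrow> real) \<Rightarrow> (nat \<Rightarrow> real) \<Rightarrow> (nat \<Rightarrow> nat \<Rightarrow> bool) \<Rightarrow> real" where
  "layout_gap n x y prec = Min ((square_gap n x y prec) ` {1..n})"

definition is_staircase :: "nat \<Rightarrow> (nat \<Rightarrow> real) \<Rightarrow> (nat \<Rightarrow> nat \<Rightarrow> bool) \<Rightarrow> bool" where
  "is_staircase n x prec \<longleftrightarrow>
     ((\<forall>i\<in>{1..n}. \<forall>j\<in>{1..n}. i \<le> j \<longrightarrow> x i \<le> x j) \<or>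
      (\<forall>i\<in>{1..n}. \<forall>j\<in>{1..n}. i \<le> j \<longrightarrow> x i \<ge> x j)) \<and>
     ((\<forall>i\<in>{1..n}. \<forall>j\<in>{1..n}. i < j \<longrightarrow> prec i j) \<or>
      (\<forall>i\<in>{1..n}. \<forall>j\<in>{1..n}. i < j \<longrightarrow> prec j i))"

end

theory Submission
  imports Defs
begin

text \<open>Put the squares on a diagonal with steps dx = (w - 1)/(n - 1) and dy = (h - 1)/(n - 1),
  both at most 1, each square in front of its predecessor. As the centres increase in both
  coordinates, a boundary point of s_i covered by any later square is already covered by
  s_(i+1). Hence the bottom and left sides of s_i are fully visible, while s_(i+1) hides all but
  an initial piece of length dx of the top side and of length dy of the right side. Every square
  but the front one therefore has gap dx + dy, and the front square has gap 2.\<close>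

lemma usquare_eq_cbox: "usquare a b = cbox (a - 1/2, b - 1/2) (a + 1/2, b + 1/2)"
  unfolding usquare_def cbox_Pair_eq by (auto simp: cbox_interval abs_if split: if_split_asm)

lemma closed_usquare: "closed (usquare a b)"
  unfolding usquare_eq_cbox by (rule closed_cbox)

lemma side_in_frontier_usquare:
  assumes "k < 4" "0 \<le> t" "t \<le> 1"
  shows "side a b k t \<in> frontier (usquare a b)"
  using assms unfolding usquare_eq_cbox frontier_cbox
  by (auto simp: side_def mem_box Basis_prod_def cbox_Pair_eq numeral_eq_Suc less_Suc_eq)

lemma side_outside_shifted_usquare_iff:
  fixes a b dx dy t :: real
  assumes "0 < dx" "dx \<le> 1" "0 < dy" "dy \<le> 1" "k < 4" "0 \<le> t" "t \<le> 1"
  shows "side a b k t \<notin> usquare (a + dx) (b + dy) \<longleftrightarrow> (k = 1 \<longrightarrow> t < dx) \<and> (k = 3 \<longrightarrow> t < dy)"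
  using assms by (auto simp: side_def usquare_def abs_if numeral_eq_Suc less_Suc_eq)

lemma mem_usquare_later_imp_mem_usquare_next:
  fixes x y :: "nat \<Rightarrow> real"
  assumes "mono x" "mono y" "i < j"
    and "p \<in> usquare (x i) (y i)" "p \<in> usquare (x j) (y j)"
  shows "p \<in> usquare (x (Suc i)) (y (Suc i))"
proof -
  have "x i \<le> x (Suc i)" "x (Suc i) \<le> x j" "y i \<le> y (Suc i)" "y (Suc i) \<le> y j"
    using assms(1-3) by (simp_all add: monoD)
  with assms(4,5) show ?thesis
    unfolding usquare_def mem_Collect_eq abs_le_iff by linarith
qed

lemma visible_monotone_staircase_iff:
  fixes x y :: "nat \<Rightarrow> real"
  assumes "mono x" "mono y"
  shows "visible n x y (<) i p \<longleftrightarrow>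
           p \<in> frontier (usquare (x i) (y i)) \<and> \<not> (i < n \<and> p \<in> usquare (x (Suc i)) (y (Suc i)))"
proof
  assume visible: "visible n x y (<) i p"
  have "\<not> (i < n \<and> p \<in> usquare (x (Suc i)) (y (Suc i)))"
  proof
    assume covered: "i < n \<and> p \<in> usquare (x (Suc i)) (y (Suc i))"
    then have "Suc i \<in> {1..n}" "Suc i \<noteq> i"
      by auto
    with visible covered have "Suc i < i"
      unfolding visible_def by blast
    then show False
      by simp
  qed
  with visible show "p \<in> frontier (usquare (x i) (y i)) \<and> \<not> (i < n \<and> p \<in> usquare (x (Suc i)) (y (Suc i)))"
    by (simp add: visible_def)
next
  assume p: "p \<in> frontier (usquare (x i) (y i)) \<and> \<not> (i < n \<and> p \<in> usquare (x (Suc i)) (y (Suc i)))"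
  then have "p \<in> usquare (x i) (y i)"
    using closed_usquare frontier_subset_closed by blast
  have "j < i" if "j \<in> {1..n}" "j \<noteq> i" "p \<in> usquare (x j) (y j)" for j
  proof (rule ccontr)
    assume "\<not> j < i"
    with that have "i < j" "i < n"
      by auto
    with p \<open>p \<in> usquare (x i) (y i)\<close> \<open>p \<in> usquare (x j) (y j)\<close> show False
      using mem_usquare_later_imp_mem_usquare_next[OF assms] by blast
  qed
  with p show "visible n x y (<) i p"
    unfolding visible_def by blast
qed

lemma visible_perimeter_uniform_staircase:
  fixes x y :: "nat \<Rightarrow> real"
  assumes dx: "0 < dx" "dx \<le> 1" and dy: "0 < dy" "dy \<le> 1"
    and x: "\<And>j. x j = x0 + real j * dx" and y: "\<And>j. y j = y0 + real j * dy"
  shows "visible_perimeter n x y (<) i = (if i < n then 2 + dx + dy else 4)"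
proof -
  have "mono x" "mono y"
    using dx dy by (auto intro!: monoI simp: x y mult_right_mono)
  moreover have "x (Suc i) = x i + dx" "y (Suc i) = y i + dy"
    by (simp_all add: x y algebra_simps)
  ultimately have "visible n x y (<) i (side (x i) (y i) k t) \<longleftrightarrow>
      (i < n \<longrightarrow> (k = 1 \<longrightarrow> t < dx) \<and> (k = 3 \<longrightarrow> t < dy))"
    if "k < 4" "0 \<le> t" "t \<le> 1" for k t
    using side_in_frontier_usquare[OF that] side_outside_shifted_usquare_iff[OF dx dy that]
    by (simp add: visible_monotone_staircase_iff)
  then have "{t \<in> {0..1}. visible n x y (<) i (side (x i) (y i) k t)} =
      (if i < n \<and> k = 1 then {0..<dx} else if i < n \<and> k = 3 then {0..<dy} else {0..1})"
    if "k < 4" for k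
    using that dx dy by auto
  then show ?thesis
    using dx dy unfolding visible_perimeter_def by (simp add: numeral_eq_Suc)
qed

lemma layout_gap_uniform_staircase:
  fixes x y :: "nat \<Rightarrow> real"
  assumes "n \<ge> 2" and dx: "0 < dx" "dx \<le> 1" and dy: "0 < dy" "dy \<le> 1"
    and x: "\<And>j. x j = x0 + real j * dx" and y: "\<And>j. y j = y0 + real j * dy"
  shows "layout_gap n x y (<) = dx + dy"
proof -
  have gap: "square_gap n x y (<) i = (if i < n then dx + dy else 2)" for i
    using visible_perimeter_uniform_staircase[OF dx dy x y] by (simp add: square_gap_def)
  show ?thesis
    unfolding layout_gap_def
  proof (rule Min_eqI)
    show "dx + dy \<in> square_gap n x y (<) ` {1..n}"
      using \<open>n \<ge> 2\<close> by (intro image_eqI[of _ _ 1]) (auto simp: gap)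
  qed (use dx dy in \<open>auto simp: gap\<close>)
qed

lemma diagonal_step_bounds:
  fixes c :: real
  assumes "1 < c" "c \<le> 2" "n \<ge> 2"
  defines "d \<equiv> (c - 1) / (real n - 1)"
  shows "0 < d" "d \<le> 1"
    and "j \<in> {1..n} \<Longrightarrow> 1/2 \<le> (1/2 - d) + real j * d \<and> (1/2 - d) + real j * d \<le> c - 1/2"
proof -
  have n: "1 \<le> real n - 1"
    using assms(3) by simp
  then show "0 < d" "d \<le> 1"
    using assms(1,2) by (auto simp: d_def divide_le_eq_1)
  have "(real n - 1) * d = c - 1"
    using n by (simp add: d_def)
  moreover assume "j \<in> {1..n}"
  then have "0 \<le> (real j - 1) * d" "(real j - 1) * d \<le> (real n - 1) * d"
    using \<open>0 < d\<close> by (auto intro: mult_right_mono)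
  ultimately show "1/2 \<le> (1/2 - d) + real j * d \<and> (1/2 - d) + real j * d \<le> c - 1/2"
    by (simp add: algebra_simps)
qed

theorem lemma5:
  fixes w h :: real and n :: nat
  assumes "1 < w" "w \<le> 2" "1 < h" "h \<le> 2" "n \<ge> 2"
  shows "\<exists>y :: nat \<Rightarrow> real.
           (\<forall>i\<in>{1..n}. 1/2 \<le> y i \<and> y i \<le> h - 1/2) \<and>
           (\<forall>i\<in>{1..n}. \<forall>j\<in>{1..n}. i < j \<longrightarrow> y i < y j) \<and>
           (\<exists>x prec. is_layout w n x prec \<and> is_staircase n x prec \<and>
              layout_gap n x y prec = (w + h - 2) / (real n - 1))"
proof -
  define dx where "dx = (w - 1) / (real n - 1)"
  define dy where "dy = (h - 1) / (real n - 1)"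
  define x where "x j = (1/2 - dx) + real j * dx" for j
  define y where "y j = (1/2 - dy) + real j * dy" for j
  have steps: "0 < dx" "dx \<le> 1" "0 < dy" "dy \<le> 1"
    using diagonal_step_bounds(1,2)[OF assms(1,2,5)] diagonal_step_bounds(1,2)[OF assms(3,4,5)]
    by (simp_all add: dx_def dy_def)
  have x_range: "1/2 \<le> x j \<and> x j \<le> w - 1/2" if "j \<in> {1..n}" for j
    using diagonal_step_bounds(3)[OF assms(1,2,5) that] by (simp add: x_def dx_def)
  have y_range: "1/2 \<le> y j \<and> y j \<le> h - 1/2" if "j \<in> {1..n}" for j
    using diagonal_step_bounds(3)[OF assms(3,4,5) that] by (simp add: y_def dy_def)
  have "is_layout w n x (<)"
    using x_range by (auto simp: is_layout_def strict_total_order_on_def)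
  moreover have "is_staircase n x (<)"
    using steps by (auto simp: is_staircase_def x_def mult_right_mono)
  moreover have "y i < y j" if "i < j" for i j
    using steps that by (simp add: y_def mult_strict_right_mono)
  moreover have "layout_gap n x y (<) = (w + h - 2) / (real n - 1)"
    using layout_gap_uniform_staircase[OF assms(5) steps x_def y_def]
    by (simp add: dx_def dy_def add_divide_distrib[symmetric])
  ultimately show ?thesis
    using y_range by blast
qed

end
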